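(* Let a group $G$ act by combinatorial isometries without cube inversions on a $\mathrm{CAT}(0)$ cube complex $Z$, and let $\mathfrak{H}$ be a $G$-invariant family of hyperplanes of $Z$ which is strongly collapsible. Then $\mathfrak{H}$ is weakly collapsible.
   Context: In a $\mathrm{CAT}(0)$ cube complex, hyperplanes are equivalence classes of edges under the relation generated by "being opposite edges of a square"; each hyperplane $H$ has two halfspaces (the components of the complement of its open carrier, the union of open cells whose closure contains an edge dual to $H$); the carrier of $H$ is the union of closed cubes containing an edge dual to $H$. For non-empty subsets $A,B$ (a hyperplane being replaced by its carrier), $\mathrm{Sep}(A\mid B)$ is the set of hyperplanes $H$ such that $A$ is contained in one halfspace of $H$ and $B$ in the other. A cube inversion is an isometry stabilizing some cube without fixing it pointwise. For a $G$-invariant family $\mathfrak{H}$ of hyperplanes: $\mathfrak{H}$ is weakly collapsible if for every vertex $z$ and every $g\in G\setminus\mathrm{Stab}(z)$, $\mathrm{Sep}(z\mid gz)\not\subseteq\mathfrak{H}$; $\mathfrak{H}$ is strongly collapsible if for every $H\in\mathfrak{H}$ and every $g\in G\setminus\mathrm{Stab}(H)$, $\mathrm{Sep}(H\mid gH)\not\subseteq\mathfrak{H}$. *)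

theory Defs
  imports "HOL-Algebra.Group_Action"
begin

text \<open>A CAT(0) cube complex is encoded by its 1-skeleton, which is a median graph
  (Chepoi / Roller / Gerasimov); the cube complex is the cube completion of that graph.\<close>

definition simple_graph :: "('v \<Rightarrow> 'v \<Rightarrow> bool) \<Rightarrow> bool" where
  "simple_graph E \<longleftrightarrow> (\<forall>u v. E u v \<longrightarrow> E v u) \<and> (\<forall>u. \<not> E u u)"

definition gconnected :: "('v \<Rightarrow> 'v \<Rightarrow> bool) \<Rightarrow> bool" where
  "gconnected E \<longleftrightarrow> (\<forall>u v. E\<^sup>*\<^sup>* u v)"

definition gdist :: "('v \<Rightarrow> 'v \<Rightarrow> bool) \<Rightarrow> 'v \<Rightarrow> 'v \<Rightarrow> nat" where
  "gdist E u v = (LEAST n. (E ^^ n) u v)"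

definition ginterval :: "('v \<Rightarrow> 'v \<Rightarrow> bool) \<Rightarrow> 'v \<Rightarrow> 'v \<Rightarrow> 'v set" where
  "ginterval E u v = {w. gdist E u w + gdist E w v = gdist E u v}"

definition median_graph :: "('v \<Rightarrow> 'v \<Rightarrow> bool) \<Rightarrow> bool" where
  "median_graph E \<longleftrightarrow> simple_graph E \<and> gconnected E \<and>
     (\<forall>x y z. \<exists>!m. m \<in> ginterval E x y \<inter> ginterval E y z \<inter> ginterval E x z)"

abbreviation cat0_cube_complex :: "('v \<Rightarrow> 'v \<Rightarrow> bool) \<Rightarrow> bool" where
  "cat0_cube_complex E \<equiv> median_graph E"

definition edges :: "('v \<Rightarrow> 'v \<Rightarrow> bool) \<Rightarrow> 'v set set" where
  "edges E = {{u, v} | u v. E u v}"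

text \<open>Cubes of the complex: vertex sets spanning a copy of the k-cube graph.\<close>
definition is_cube :: "('v \<Rightarrow> 'v \<Rightarrow> bool) \<Rightarrow> 'v set \<Rightarrow> bool" where
  "is_cube E C \<longleftrightarrow> (\<exists>(k::nat) (f :: 'v \<Rightarrow> nat \<Rightarrow> bool).
      bij_betw f C {x. \<forall>i\<ge>k. \<not> x i} \<and>
      (\<forall>u\<in>C. \<forall>v\<in>C. E u v \<longleftrightarrow> card {i. f u i \<noteq> f v i} = 1))"

definition opposite :: "('v \<Rightarrow> 'v \<Rightarrow> bool) \<Rightarrow> 'v set \<Rightarrow> 'v set \<Rightarrow> bool" where
  "opposite E e e' \<longleftrightarrow> (\<exists>a b c d. distinct [a, b, c, d] \<and>
      E a b \<and> E b c \<and> E c d \<and> E d a \<and> e = {a, b} \<and> e' = {d, c})"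

definition hyperplanes :: "('v \<Rightarrow> 'v \<Rightarrow> bool) \<Rightarrow> 'v set set set" where
  "hyperplanes E = {{e'. (opposite E)\<^sup>*\<^sup>* e e'} | e. e \<in> edges E}"

definition carrier_hyp :: "'v set set \<Rightarrow> 'v set" where
  "carrier_hyp H = \<Union>H"

text \<open>Halfspaces of H: components of the complement of the open carrier, i.e. the
  vertex sets of the connected components of the graph with the edges dual to H removed.\<close>
definition halfspaces :: "('v \<Rightarrow> 'v \<Rightarrow> bool) \<Rightarrow> 'v set set \<Rightarrow> 'v set set" where
  "halfspaces E H = range (\<lambda>v. {w. (\<lambda>x y. E x y \<and> {x, y} \<notin> H)\<^sup>*\<^sup>* v w})"

definition Sep :: "('v \<Rightarrow> 'v \<Rightarrow> bool) \<Rightarrow> 'v set \<Rightarrow> 'v set \<Rightarrow> 'v set set set" where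
  "Sep E A B = {H \<in> hyperplanes E. \<exists>h1 \<in> halfspaces E H. \<exists>h2 \<in> halfspaces E H.
      h1 \<noteq> h2 \<and> A \<subseteq> h1 \<and> B \<subseteq> h2}"

definition hyp_image :: "('v \<Rightarrow> 'v) \<Rightarrow> 'v set set \<Rightarrow> 'v set set" where
  "hyp_image f H = (\<lambda>e. f ` e) ` H"

definition isometric_action :: "('g, 'b) monoid_scheme \<Rightarrow> ('v \<Rightarrow> 'v \<Rightarrow> bool) \<Rightarrow> ('g \<Rightarrow> 'v \<Rightarrow> 'v) \<Rightarrow> bool" where
  "isometric_action G E phi \<longleftrightarrow> group_action G UNIV phi \<and>
     (\<forall>g\<in>carrier G. \<forall>u v. E u v \<longleftrightarrow> E (phi g u) (phi g v))"

definition no_cube_inversions :: "('g, 'b) monoid_scheme \<Rightarrow> ('v \<Rightarrow> 'v \<Rightarrow> bool) \<Rightarrow> ('g \<Rightarrow> 'v \<Rightarrow> 'v) \<Rightarrow> bool" where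
  "no_cube_inversions G E phi \<longleftrightarrow> (\<forall>g\<in>carrier G. \<forall>C. is_cube E C \<and> phi g ` C = C \<longrightarrow>
      (\<forall>v\<in>C. phi g v = v))"

definition invariant_family :: "('g, 'b) monoid_scheme \<Rightarrow> ('v \<Rightarrow> 'v \<Rightarrow> bool) \<Rightarrow> ('g \<Rightarrow> 'v \<Rightarrow> 'v) \<Rightarrow> 'v set set set \<Rightarrow> bool" where
  "invariant_family G E phi \<HH> \<longleftrightarrow> \<HH> \<subseteq> hyperplanes E \<and>
      (\<forall>g\<in>carrier G. \<forall>H\<in>\<HH>. hyp_image (phi g) H \<in> \<HH>)"

definition weakly_collapsible :: "('g, 'b) monoid_scheme \<Rightarrow> ('v \<Rightarrow> 'v \<Rightarrow> bool) \<Rightarrow> ('g \<Rightarrow> 'v \<Rightarrow> 'v) \<Rightarrow> 'v set set set \<Rightarrow> bool" where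
  "weakly_collapsible G E phi \<HH> \<longleftrightarrow> (\<forall>z. \<forall>g\<in>carrier G. phi g z \<noteq> z \<longrightarrow>
      \<not> Sep E {z} {phi g z} \<subseteq> \<HH>)"

definition strongly_collapsible :: "('g, 'b) monoid_scheme \<Rightarrow> ('v \<Rightarrow> 'v \<Rightarrow> bool) \<Rightarrow> ('g \<Rightarrow> 'v \<Rightarrow> 'v) \<Rightarrow> 'v set set set \<Rightarrow> bool" where
  "strongly_collapsible G E phi \<HH> \<longleftrightarrow> (\<forall>H\<in>\<HH>. \<forall>g\<in>carrier G. hyp_image (phi g) H \<noteq> H \<longrightarrow>
      \<not> Sep E (carrier_hyp H) (carrier_hyp (hyp_image (phi g) H)) \<subseteq> \<HH>)"

end

theory Submission
  imports Defs
begin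

text \<open>The 1-skeleton of the complex is a median graph, whose hyperplanes are the
  Djokovic-Winkler classes of edges; the hyperplanes separating two vertices are as many as
  their distance, and a vertex is determined by the hyperplanes separating it from a base point.

  Let \<open>g\<close> move \<open>z\<close> with \<open>Sep(z | gz) \<subseteq> \<HH>\<close>. For a hyperplane \<open>J\<close> of \<open>Sep(z | gz)\<close> adjacent
  to \<open>z\<close>, the carriers of \<open>J\<close> and \<open>gJ\<close> contain \<open>z\<close> and \<open>gz\<close>, so \<open>Sep(J | gJ) \<subseteq> \<HH>\<close> and
  strong collapsibility gives \<open>gJ = J\<close>. Since \<open>g\<close> fixes these hyperplanes, a counting argument
  shows that they are all of \<open>Sep(z | gz)\<close> and that \<open>g\<close> swaps \<open>z\<close> and \<open>gz\<close>. Pairwise crossing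
  hyperplanes adjacent to \<open>z\<close> span a cube, so the interval between \<open>z\<close> and \<open>gz\<close> is a cube
  that \<open>g\<close> inverts.\<close>

lemma Sep_antimono:
  assumes "A' \<subseteq> A" and "B' \<subseteq> B"
  shows "Sep E A B \<subseteq> Sep E A' B'"
proof
  fix H assume "H \<in> Sep E A B"
  then obtain h1 h2 where "H \<in> hyperplanes E" "h1 \<in> halfspaces E H" "h2 \<in> halfspaces E H"
    "h1 \<noteq> h2" "A \<subseteq> h1" "B \<subseteq> h2"
    unfolding Sep_def by blast
  then show "H \<in> Sep E A' B'"
    unfolding Sep_def using assms by (intro CollectI conjI bexI[of _ h1] bexI[of _ h2]) auto
qed

lemma mem_carrier_hyp_image: "z \<in> carrier_hyp J \<Longrightarrow> f z \<in> carrier_hyp (hyp_image f J)"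
  unfolding carrier_hyp_def hyp_image_def by blast

lemma is_cubeI:
  assumes "finite A" and bij: "bij_betw \<phi> C (Pow A)"
    and adj: "\<And>u v. u \<in> C \<Longrightarrow> v \<in> C \<Longrightarrow> E u v \<longleftrightarrow> card (sym_diff (\<phi> u) (\<phi> v)) = 1"
  shows "is_cube E C"
proof -
  obtain idx where idx: "bij_betw idx {0..<card A} A"
    using ex_bij_betw_nat_finite[OF \<open>finite A\<close>] by blast
  define k where "k = card A"
  define coords where "coords X i \<longleftrightarrow> i < k \<and> idx i \<in> X" for X i
  have inj_idx: "inj_on idx {0..<k}" and idx_image: "idx ` {0..<k} = A"
    using idx unfolding k_def bij_betw_def by auto
  have "bij_betw coords (Pow A) {x. \<forall>i\<ge>k. \<not> x i}"
  proof (rule bij_betw_byWitness[where f' = "\<lambda>x. idx ` {i. x i}"])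
    show "\<forall>X\<in>Pow A. idx ` {i. coords X i} = X"
      unfolding coords_def using idx_image by auto
    show "\<forall>x\<in>{x. \<forall>i\<ge>k. \<not> x i}. coords (idx ` {i. x i}) = x"
    proof
      fix x assume x: "x \<in> {x. \<forall>i\<ge>k. \<not> x i}"
      have "coords (idx ` {i. x i}) i = x i" for i
      proof (cases "i < k")
        case True
        have "i = j" if "idx i = idx j" "x j" for j
          using x that True inj_onD[OF inj_idx, of i j] leI by auto
        then show ?thesis
          unfolding coords_def using True by auto
      next
        case False
        then show ?thesis
          unfolding coords_def using x by auto
      qed
      then show "coords (idx ` {i. x i}) = x" ..
    qed
    show "coords ` Pow A \<subseteq> {x. \<forall>i\<ge>k. \<not> x i}"
      unfolding coords_def by auto
    have "{i. x i} \<subseteq> {0..<k}" if "\<forall>i\<ge>k. \<not> x i" for x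
      using that by (metis atLeastLessThan_iff mem_Collect_eq not_less subsetI zero_le)
    then show "(\<lambda>x. idx ` {i. x i}) ` {x. \<forall>i\<ge>k. \<not> x i} \<subseteq> Pow A"
      using idx_image by blast
  qed
  then have "bij_betw (coords \<circ> \<phi>) C {x. \<forall>i\<ge>k. \<not> x i}"
    using bij by (rule bij_betw_trans[rotated])
  moreover have "card {i. coords (\<phi> u) i \<noteq> coords (\<phi> v) i} = card (sym_diff (\<phi> u) (\<phi> v))"
    if "u \<in> C" "v \<in> C" for u v
  proof -
    have "\<phi> u \<subseteq> A" "\<phi> v \<subseteq> A"
      using bij that unfolding bij_betw_def by auto
    then have "idx ` {i. coords (\<phi> u) i \<noteq> coords (\<phi> v) i} = sym_diff (\<phi> u) (\<phi> v)"
      unfolding coords_def using idx_image by auto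
    moreover have "inj_on idx {i. coords (\<phi> u) i \<noteq> coords (\<phi> v) i}"
      using inj_idx unfolding coords_def by (rule inj_on_subset) auto
    ultimately show ?thesis
      using card_image by metis
  qed
  ultimately show ?thesis
    unfolding is_cube_def using adj by (intro exI[of _ k] exI[of _ "coords \<circ> \<phi>"]) auto
qed

section \<open>Median graphs\<close>

locale cube_complex_graph =
  fixes E :: "'v \<Rightarrow> 'v \<Rightarrow> bool"
  assumes median_graph: "median_graph E"
begin

abbreviation d :: "'v \<Rightarrow> 'v \<Rightarrow> nat" where
  "d \<equiv> gdist E"

lemma edge_sym: "E u v \<Longrightarrow> E v u"
  using median_graph unfolding median_graph_def simple_graph_def by blast

lemma edge_irrefl: "\<not> E u u"
  using median_graph unfolding median_graph_def simple_graph_def by blast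

lemma relpowp_gdist: "(E ^^ d u v) u v"
proof -
  have "E\<^sup>*\<^sup>* u v"
    using median_graph unfolding median_graph_def gconnected_def by blast
  then have "\<exists>n. (E ^^ n) u v"
    by (meson rtranclp_imp_relpowp)
  then show ?thesis
    unfolding gdist_def by (rule LeastI_ex)
qed

lemma gdist_le: "(E ^^ n) u v \<Longrightarrow> d u v \<le> n"
  unfolding gdist_def by (rule Least_le)

lemma relpowp_sym: "(E ^^ n) u v \<Longrightarrow> (E ^^ n) v u"
proof (induction n arbitrary: v)
  case (Suc n)
  then obtain y where "(E ^^ n) u y" "E y v"
    by auto
  then show ?case
    using Suc.IH edge_sym by (meson relpowp_Suc_I2)
qed simp

lemma gdist_sym: "d u v = d v u"
  by (meson antisym gdist_le relpowp_gdist relpowp_sym)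

lemma gdist_eq_0_iff [simp]: "d u v = 0 \<longleftrightarrow> u = v"
  using relpowp_gdist[of u v] gdist_le[of 0 u u] by auto

lemma gdist_self [simp]: "d u u = 0"
  by simp

lemma gdist_triangle: "d u w \<le> d u v + d v w"
  by (rule gdist_le[OF relpowp_trans[OF relpowp_gdist relpowp_gdist]])

lemma gdist_eq_1_iff: "d u v = 1 \<longleftrightarrow> E u v"
proof
  assume "d u v = 1"
  then have "(E ^^ 1) u v"
    using relpowp_gdist by metis
  then show "E u v"
    by (simp only: relpowp_1)
next
  assume "E u v"
  then have "d u v \<le> 1" and "u \<noteq> v"
    using gdist_le[of 1 u v] edge_irrefl by auto
  then show "d u v = 1"
    by (simp add: le_Suc_eq)
qed

lemma gdist_edge: "E u v \<Longrightarrow> d u v = 1"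
  using gdist_eq_1_iff by blast

lemma gdist_SucE:
  assumes "d u v = Suc n"
  obtains u' where "E u u'" and "d u' v = n"
proof -
  obtain u' where u': "E u u'" "(E ^^ n) u' v"
    using relpowp_gdist[of u v] assms by (metis relpowp_Suc_D2)
  then have "d u' v \<le> n"
    by (simp add: gdist_le)
  moreover have "d u v \<le> 1 + d u' v"
    using gdist_triangle[of u v u'] gdist_edge[OF u'(1)] by simp
  ultimately show ?thesis
    using that u'(1) assms by simp
qed

lemma median_exists:
  obtains m where "d x m + d m y = d x y" and "d y m + d m z = d y z" and "d x m + d m z = d x z"
  using median_graph unfolding median_graph_def ginterval_def by blast

lemma median_unique:
  assumes "d x m + d m y = d x y" "d y m + d m z = d y z" "d x m + d m z = d x z"
    and "d x m' + d m' y = d x y" "d y m' + d m' z = d y z" "d x m' + d m' z = d x z"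
  shows "m = m'"
  using median_graph assms unfolding median_graph_def ginterval_def by blast

text \<open>Median graphs are bipartite: the median of \<open>p\<close> and the endpoints of an edge is one of
  the endpoints.\<close>

lemma edge_gdist_cases: "E u v \<Longrightarrow> d p v = Suc (d p u) \<or> d p u = Suc (d p v)"
proof -
  assume uv: "E u v"
  obtain m where m: "d p m + d m u = d p u" "d u m + d m v = d u v" "d p m + d m v = d p v"
    by (rule median_exists)
  have "d u m = 0 \<or> d m v = 0"
    using m(2) gdist_edge[OF uv] by linarith
  then have "m = u \<or> m = v"
    by (metis gdist_eq_0_iff)
  then show ?thesis
    using m gdist_edge[OF uv] gdist_sym[of v u] by auto
qed

lemma edge_gdist_cases': "E u v \<Longrightarrow> d v p = Suc (d u p) \<or> d u p = Suc (d v p)"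
  using edge_gdist_cases gdist_sym by metis

lemma gdist_edge_sides: "E a b \<Longrightarrow> d p a < d p b \<or> d p b < d p a"
  by (drule edge_gdist_cases[where p = p]) linarith

lemma common_neighbour_gdist:
  assumes "u \<noteq> v" and uw: "E u w" and wv: "E w v"
  shows "d u v = 2"
proof -
  have "d u v \<le> 2"
    using gdist_triangle[of u v w] gdist_edge[OF uw] gdist_edge[OF wv] by simp
  moreover have "d u v \<noteq> 1"
    using edge_gdist_cases[OF wv, of u] gdist_edge[OF uw] by linarith
  moreover have "d u v \<noteq> 0"
    using \<open>u \<noteq> v\<close> by simp
  ultimately show ?thesis
    by linarith
qed

text \<open>The set of vertices closer to \<open>a\<close> than to \<open>b\<close> contains every common neighbour of two of
  its vertices at distance two: otherwise the median of these two vertices and \<open>a\<close> would be a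
  second median of the two vertices and \<open>b\<close>.\<close>

lemma halfspace_locally_convex:
  assumes ab: "E a b" and uw: "E u w" and wv: "E w v" and "u \<noteq> v"
    and u: "d u a < d u b" and v: "d v a < d v b"
  shows "d w a < d w b"
proof (rule ccontr)
  assume w: "\<not> d w a < d w b"
  have vw: "E v w"
    using wv edge_sym by blast
  have ub: "d u b = Suc (d u a)" and vb: "d v b = Suc (d v a)" and wa: "d w a = Suc (d w b)"
    using edge_gdist_cases[OF ab, of u] edge_gdist_cases[OF ab, of v]
      edge_gdist_cases[OF ab, of w] u v w by linarith+
  have "d w a = Suc (d u a)" "d w a = Suc (d v a)"
    using edge_gdist_cases'[OF uw, of a] edge_gdist_cases'[OF uw, of b]
      edge_gdist_cases'[OF vw, of a] edge_gdist_cases'[OF vw, of b] ub vb wa by linarith+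
  then have dist: "d u a = d v a" "d u b = Suc (d u a)" "d v b = Suc (d u a)"
    "d w a = Suc (d u a)" "d w b = d u a"
    using ub vb wa by simp_all
  have uv: "d u v = 2"
    using common_neighbour_gdist uw wv \<open>u \<noteq> v\<close> by blast
  obtain m where m: "d u m + d m v = d u v" "d v m + d m a = d v a" "d u m + d m a = d u a"
    by (rule median_exists)
  have um: "d u m = 1" "d v m = 1"
    using m uv dist(1) gdist_sym[of m v] by linarith+
  have "d m b \<le> d m a + 1" "d u b \<le> d u m + d m b"
    using gdist_triangle[of m b a] gdist_triangle[of u b m] gdist_edge[OF ab] by auto
  then have mb: "d m b = d u a"
    using m(3) um dist by linarith
  have "m = w"
  proof (rule median_unique)
    show "d u m + d m v = d u v" "d v m + d m b = d v b" "d u m + d m b = d u b"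
      using m(1) um mb dist by simp_all
    show "d u w + d w v = d u v" "d v w + d w b = d v b" "d u w + d w b = d u b"
      using uv gdist_edge[OF uw] gdist_edge[OF vw] gdist_sym[of w v] dist by simp_all
  qed
  then show False
    using m(3) um dist by simp
qed

lemma square_preserves_crossing:
  assumes ab: "E a b" and sq: "E x y" "E y y'" "E y' x'" "E x' x" "x \<noteq> y'" "y \<noteq> x'"
    and x: "d x a < d x b" and y: "d y b < d y a"
  shows "d x' a < d x' b" and "d y' b < d y' a"
proof -
  have ba: "E b a"
    using ab edge_sym by blast
  show "d x' a < d x' b"
  proof (rule ccontr)
    assume "\<not> d x' a < d x' b"
    then have "d x' b < d x' a"
      using gdist_edge_sides[OF ab] by blast
    then have "d x b < d x a"
      using halfspace_locally_convex[OF ba edge_sym[OF sq(1)] edge_sym[OF sq(4)] sq(6)] y by blast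
    then show False
      using x by simp
  qed
  show "d y' b < d y' a"
  proof (rule ccontr)
    assume "\<not> d y' b < d y' a"
    then have "d y' a < d y' b"
      using gdist_edge_sides[OF ab] by blast
    then have "d y a < d y b"
      using halfspace_locally_convex[OF ab sq(1,2,5) x] by blast
    then show False
      using y by simp
  qed
qed

section \<open>Hyperplanes\<close>

definition hyperplane_of :: "'v set \<Rightarrow> 'v set set" where
  "hyperplane_of e = {e'. (opposite E)\<^sup>*\<^sup>* e e'}"

lemma opposite_sym: "opposite E e e' \<Longrightarrow> opposite E e' e"
  unfolding opposite_def
proof (elim exE conjE)
  fix a b c c' assume "distinct [a, b, c, c']" "E a b" "E b c" "E c c'" "E c' a"
    and "e = {a, b}" "e' = {c', c}"
  then show "\<exists>a b c d. distinct [a, b, c, d] \<and> E a b \<and> E b c \<and> E c d \<and> E d a \<and>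
      e' = {a, b} \<and> e = {d, c}"
    using edge_sym by (intro exI[of _ c'] exI[of _ c] exI[of _ b] exI[of _ a]) auto
qed

lemma hyperplane_of_eq: "e' \<in> hyperplane_of e \<Longrightarrow> hyperplane_of e' = hyperplane_of e"
proof -
  have "symp (opposite E)\<^sup>*\<^sup>*"
    by (rule symp_rtranclp) (auto intro: sympI opposite_sym)
  then show "e' \<in> hyperplane_of e \<Longrightarrow> hyperplane_of e' = hyperplane_of e"
    unfolding hyperplane_of_def by (auto dest: sympD intro: rtranclp_trans)
qed

lemma mem_hyperplane_of_self: "e \<in> hyperplane_of e"
  unfolding hyperplane_of_def by simp

lemma hyperplanes_eq: "hyperplanes E = {hyperplane_of {a, b} |a b. E a b}"
  unfolding hyperplanes_def edges_def hyperplane_of_def by blast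

lemma hyperplane_of_mem_hyperplanes: "E a b \<Longrightarrow> hyperplane_of {a, b} \<in> hyperplanes E"
  unfolding hyperplanes_eq by blast

lemma crossing_if_mem_hyperplane_of:
  assumes ab: "E a b" and "e \<in> hyperplane_of {a, b}"
  obtains x y where "e = {x, y}" "E x y" "d x a < d x b" "d y b < d y a"
proof -
  have "(opposite E)\<^sup>*\<^sup>* {a, b} e"
    using assms(2) unfolding hyperplane_of_def by simp
  then have "\<exists>x y. e = {x, y} \<and> E x y \<and> d x a < d x b \<and> d y b < d y a"
  proof (induction rule: rtranclp_induct)
    case base
    then show ?case
      using ab gdist_edge[OF ab] gdist_sym[of b a] by (intro exI[of _ a] exI[of _ b]) auto
  next
    case (step e1 e2)
    obtain x y where xy: "e1 = {x, y}" "E x y" "d x a < d x b" "d y b < d y a"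
      using step.IH by blast
    obtain p q r s where sq: "distinct [p, q, r, s]" "E p q" "E q r" "E r s" "E s p"
      and e12: "e1 = {p, q}" "e2 = {s, r}"
      using step.hyps(2) unfolding opposite_def by blast
    consider "p = x" "q = y" | "p = y" "q = x"
      using xy(1) e12(1) by (auto simp: doubleton_eq_iff)
    then show ?case
    proof cases
      case 1
      then have "d s a < d s b" "d r b < d r a"
        using square_preserves_crossing[OF ab, of p q r s] sq xy by auto
      then show ?thesis
        using e12 sq(4) edge_sym by blast
    next
      case 2
      then have "d r a < d r b" "d s b < d s a"
        using square_preserves_crossing[OF ab, of q p s r] sq xy edge_sym by auto
      then show ?thesis
        using e12 sq(4) by (auto simp: insert_commute)
    qed
  qed
  then show ?thesis
    using that by blast
qed

lemma mem_hyperplane_of_if_crossing: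
  assumes ab: "E a b"
  shows "E x y \<Longrightarrow> d x a < d x b \<Longrightarrow> d y b < d y a \<Longrightarrow> {x, y} \<in> hyperplane_of {a, b}"
proof (induction "d x a" arbitrary: x y)
  case 0
  then have "x = a"
    by simp
  then have "d y b = 0"
    using 0 edge_gdist_cases[OF ab, of y] edge_gdist_cases'[OF 0(2), of a] by linarith
  then show ?case
    using \<open>x = a\<close> mem_hyperplane_of_self by simp
next
  case (Suc n)
  have xb: "d x b = Suc (Suc n)" and ya: "d y a = Suc (Suc n)" and yb: "d y b = Suc n"
    using Suc.hyps(2) Suc.prems edge_gdist_cases[OF ab, of x] edge_gdist_cases[OF ab, of y]
      edge_gdist_cases'[OF Suc.prems(1), of a] edge_gdist_cases'[OF Suc.prems(1), of b]
    by linarith+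
  obtain x' where x': "E x x'" "d x' a = n"
    using Suc.hyps(2) by (metis gdist_SucE)
  have x'b: "d x' b = Suc n"
    using x' xb edge_gdist_cases[OF ab, of x'] edge_gdist_cases'[OF x'(1), of b] by linarith
  have "y \<noteq> x'"
    using ya x' by auto
  then have yx': "d y x' = 2"
    using common_neighbour_gdist edge_sym[OF Suc.prems(1)] x'(1) by blast
  obtain m where m: "d y m + d m x' = d y x'" "d x' m + d m b = d x' b" "d y m + d m b = d y b"
    by (rule median_exists)
  have "d y m = 1" "d x' m = 1"
    using m yx' yb x'b gdist_sym[of m x'] by linarith+
  then have ym: "E y m" and x'm: "E x' m"
    using gdist_eq_1_iff by auto
  have mb: "d m b = n"
    using m(3) yb \<open>d y m = 1\<close> by linarith
  have ma: "Suc n \<le> d m a"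
    using edge_gdist_cases'[OF ym, of a] ya by linarith
  have "{x', m} \<in> hyperplane_of {a, b}"
    using Suc.hyps(1)[of x' m] x' x'm mb ma x'b by simp
  moreover have "x \<noteq> m"
    using mb xb by auto
  then have "opposite E {x', m} {x, y}"
    unfolding opposite_def using x' ym x'm Suc.prems(1) edge_sym edge_irrefl \<open>y \<noteq> x'\<close>
    by (intro exI[of _ x'] exI[of _ m] exI[of _ y] exI[of _ x]) (auto simp: insert_commute)
  ultimately show ?case
    unfolding hyperplane_of_def by (simp add: rtranclp.rtrancl_into_rtrancl)
qed

text \<open>Hyperplanes are the classes of the Djokovic-Winkler relation.\<close>

lemma edge_mem_hyperplane_of_iff:
  assumes ab: "E a b" and uv: "E u v"
  shows "{u, v} \<in> hyperplane_of {a, b} \<longleftrightarrow> \<not> (d u a < d u b \<longleftrightarrow> d v a < d v b)"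
proof
  assume "{u, v} \<in> hyperplane_of {a, b}"
  then obtain x y where "{u, v} = {x, y}" "d x a < d x b" "d y b < d y a"
    using crossing_if_mem_hyperplane_of[OF ab] by metis
  then show "\<not> (d u a < d u b \<longleftrightarrow> d v a < d v b)"
    by (auto simp: doubleton_eq_iff)
next
  assume "\<not> (d u a < d u b \<longleftrightarrow> d v a < d v b)"
  then consider "d u a < d u b" "d v b < d v a" | "d v a < d v b" "d u b < d u a"
    using gdist_edge_sides[OF ab, of u] gdist_edge_sides[OF ab, of v] by linarith
  then show "{u, v} \<in> hyperplane_of {a, b}"
  proof cases
    case 1
    then show ?thesis
      using mem_hyperplane_of_if_crossing[OF ab uv] by blast
  next
    case 2
    then have "{v, u} \<in> hyperplane_of {a, b}"
      using mem_hyperplane_of_if_crossing[OF ab edge_sym[OF uv]] by blast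
    then show ?thesis
      by (simp add: insert_commute)
  qed
qed

section \<open>Separation of vertices\<close>

definition joined :: "'v set set \<Rightarrow> 'v \<Rightarrow> 'v \<Rightarrow> bool" where
  "joined H = (\<lambda>x y. E x y \<and> {x, y} \<notin> H)\<^sup>*\<^sup>*"

lemma symp_joined: "symp (joined H)"
  unfolding joined_def
  by (rule symp_rtranclp) (auto intro!: sympI simp: edge_sym insert_commute)

lemma halfspaces_eq: "halfspaces E H = range (\<lambda>p. {w. joined H p w})"
  unfolding halfspaces_def joined_def ..

lemma joined_sym: "joined H u v \<Longrightarrow> joined H v u"
  using symp_joined by (rule sympD)

lemma joined_trans: "joined H u v \<Longrightarrow> joined H v w \<Longrightarrow> joined H u w"
  unfolding joined_def by (rule rtranclp_trans)

lemma joined_refl [simp]: "joined H u u"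
  unfolding joined_def by simp

lemma Sep_singletons: "Sep E {u} {v} = {H \<in> hyperplanes E. \<not> joined H u v}"
proof -
  have class_eq: "{w. joined H p w} = {w. joined H q w}" if "joined H p q" for H p q
    using joined_trans[OF that] joined_trans[OF joined_sym[OF that]] by blast
  have "(\<exists>h1\<in>halfspaces E H. \<exists>h2\<in>halfspaces E H. h1 \<noteq> h2 \<and> {u} \<subseteq> h1 \<and> {v} \<subseteq> h2)
      \<longleftrightarrow> \<not> joined H u v" (is "?sep \<longleftrightarrow> _") for H
  proof
    assume ?sep
    then obtain p q where pq: "{w. joined H p w} \<noteq> {w. joined H q w}" "joined H p u" "joined H q v"
      unfolding halfspaces_eq by auto
    show "\<not> joined H u v"
      using pq(1) unfolding class_eq[OF pq(2)] class_eq[OF pq(3)] using class_eq by blast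
  next
    assume "\<not> joined H u v"
    then have "{w. joined H u w} \<noteq> {w. joined H v w}"
      by (metis joined_refl mem_Collect_eq)
    moreover have "{w. joined H p w} \<in> halfspaces E H" for p
      unfolding halfspaces_eq by auto
    ultimately show ?sep
      by (intro bexI[of _ "{w. joined H u w}"] bexI[of _ "{w. joined H v w}"]) auto
  qed
  then show ?thesis
    unfolding Sep_def by simp
qed

lemma joined_to_endpoint:
  assumes ab: "E a b"
  shows "d u a < d u b \<Longrightarrow> joined (hyperplane_of {a, b}) u a"
proof (induction "d u a" arbitrary: u)
  case (Suc n)
  obtain u' where u': "E u u'" "d u' a = n"
    using Suc.hyps(2) by (metis gdist_SucE)
  have u'_side: "d u' a < d u' b"
    using Suc.hyps(2) Suc.prems u' edge_gdist_cases'[OF u'(1), of b] by linarith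
  then have "{u, u'} \<notin> hyperplane_of {a, b}"
    using edge_mem_hyperplane_of_iff[OF ab u'(1)] Suc.prems by blast
  then have "joined (hyperplane_of {a, b}) u u'"
    unfolding joined_def using u'(1) by blast
  then show ?case
    using Suc.hyps(1)[OF u'(2)[symmetric] u'_side] joined_trans by blast
qed simp

lemma joined_iff_same_side:
  assumes ab: "E a b"
  shows "joined (hyperplane_of {a, b}) u v \<longleftrightarrow> (d u a < d u b \<longleftrightarrow> d v a < d v b)"
proof
  assume "joined (hyperplane_of {a, b}) u v"
  then show "d u a < d u b \<longleftrightarrow> d v a < d v b"
    unfolding joined_def
  proof (induction rule: rtranclp_induct)
    case (step y z)
    then show ?case
      using edge_mem_hyperplane_of_iff[OF ab] by blast
  qed simp
next
  have swap: "hyperplane_of {b, a} = hyperplane_of {a, b}"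
    by (simp add: insert_commute)
  assume "d u a < d u b \<longleftrightarrow> d v a < d v b"
  then consider "d u a < d u b" "d v a < d v b" | "d u b < d u a" "d v b < d v a"
    using gdist_edge_sides[OF ab, of u] gdist_edge_sides[OF ab, of v] by linarith
  then show "joined (hyperplane_of {a, b}) u v"
  proof cases
    case 1
    then show ?thesis
      using joined_to_endpoint[OF ab] joined_sym joined_trans by blast
  next
    case 2
    then show ?thesis
      using joined_to_endpoint[OF edge_sym[OF ab]] joined_sym joined_trans unfolding swap by blast
  qed
qed

abbreviation S :: "'v \<Rightarrow> 'v \<Rightarrow> 'v set set set" where
  "S u v \<equiv> Sep E {u} {v}"

lemma S_subset_hyperplanes: "S u v \<subseteq> hyperplanes E"
  unfolding Sep_def by blast

lemma hyperplane_of_mem_S_iff: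
  "E a b \<Longrightarrow> hyperplane_of {a, b} \<in> S u v \<longleftrightarrow> \<not> (d u a < d u b \<longleftrightarrow> d v a < d v b)"
  unfolding Sep_singletons by (simp add: hyperplane_of_mem_hyperplanes joined_iff_same_side)

lemma S_sym: "S u v = S v u"
  unfolding Sep_singletons using joined_sym by blast

lemma S_self [simp]: "S u u = {}"
  unfolding Sep_singletons by simp

lemma mem_S_iff_xor:
  "H \<in> hyperplanes E \<Longrightarrow> H \<in> S u w \<longleftrightarrow> (H \<in> S u v \<longleftrightarrow> H \<notin> S v w)"
  unfolding hyperplanes_eq by (auto simp: hyperplane_of_mem_S_iff)

lemma S_triangle: "S u w = sym_diff (S u v) (S v w)"
  using mem_S_iff_xor S_subset_hyperplanes by blast

lemma S_edge: "E u v \<Longrightarrow> S u v = {hyperplane_of {u, v}}"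
proof -
  assume uv: "E u v"
  have "H = hyperplane_of {u, v}" if "H \<in> S u v" for H
  proof -
    obtain a b where ab: "E a b" "H = hyperplane_of {a, b}"
      using \<open>H \<in> S u v\<close> S_subset_hyperplanes unfolding hyperplanes_eq by blast
    then have "{u, v} \<in> H"
      using \<open>H \<in> S u v\<close> hyperplane_of_mem_S_iff edge_mem_hyperplane_of_iff[OF ab(1) uv] by blast
    then show ?thesis
      using ab(2) hyperplane_of_eq by simp
  qed
  moreover have "hyperplane_of {u, v} \<in> S u v"
    using hyperplane_of_mem_S_iff[OF uv] gdist_edge[OF uv] gdist_sym[of v u] by simp
  ultimately show ?thesis
    by blast
qed

lemma finite_S_and_card_S: "finite (S u v) \<and> card (S u v) = d u v"
proof (induction "d u v" arbitrary: u)
  case (Suc n)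
  obtain u' where u': "E u u'" "d u' v = n"
    using Suc.hyps(2) by (metis gdist_SucE)
  have "hyperplane_of {u, u'} \<notin> S u' v"
    using hyperplane_of_mem_S_iff[OF u'(1)] Suc.hyps(2) u'(2) gdist_sym[of v] by simp
  moreover have "S u v = insert (hyperplane_of {u, u'}) (S u' v)"
    using S_triangle[of u v u'] S_edge[OF u'(1)] calculation by auto
  ultimately show ?case
    using Suc.hyps(1)[OF u'(2)[symmetric]] Suc.hyps(2) u'(2) by simp
qed simp

lemma finite_S: "finite (S u v)"
  using finite_S_and_card_S by blast

lemma card_S: "card (S u v) = d u v"
  using finite_S_and_card_S by blast

lemma S_eq_empty_iff: "S u v = {} \<longleftrightarrow> u = v"
  using card_S[of u v] finite_S[of u v] by auto

lemma gdist_triangle_S: "d u w + 2 * card (S u v \<inter> S v w) = d u v + d v w"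
proof -
  have "S u w = (S u v \<union> S v w) - (S u v \<inter> S v w)"
    unfolding S_triangle[of u w v] by blast
  also have "card \<dots> = card (S u v \<union> S v w) - card (S u v \<inter> S v w)"
    by (rule card_Diff_subset) (auto simp: finite_S)
  finally have "card (S u w) = card (S u v \<union> S v w) - card (S u v \<inter> S v w)" .
  moreover have "card (S u v \<inter> S v w) \<le> card (S u v \<union> S v w)"
    by (rule card_mono) (auto simp: finite_S)
  ultimately show ?thesis
    using card_Un_Int[OF finite_S finite_S, of u v v w] by (simp add: card_S)
qed

lemma ginterval_iff_S_disjoint: "m \<in> ginterval E x y \<longleftrightarrow> S x m \<inter> S m y = {}"
  using gdist_triangle_S[of x y m] finite_S[of x m] unfolding ginterval_def by auto

definition automorphism :: "('v \<Rightarrow> 'v) \<Rightarrow> bool" where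
  "automorphism f \<longleftrightarrow> bij f \<and> (\<forall>u v. E u v \<longleftrightarrow> E (f u) (f v))"

lemma automorphism_if_isometric_action:
  assumes "isometric_action G E phi" and "g \<in> carrier G"
  shows "automorphism (phi g)"
proof -
  have "phi g \<in> Bij UNIV"
    using assms group_action.bij_prop0[of G UNIV phi g] unfolding isometric_action_def by blast
  then show ?thesis
    using assms unfolding automorphism_def isometric_action_def Bij_def by blast
qed

lemma relpowp_map_edges:
  assumes "\<And>u v. E u v \<Longrightarrow> E (f u) (f v)"
  shows "(E ^^ n) u v \<Longrightarrow> (E ^^ n) (f u) (f v)"
proof (induction n arbitrary: v)
  case (Suc n)
  then obtain y where "(E ^^ n) u y" "E y v"
    by auto
  then show ?case
    using Suc.IH assms by (meson relpowp_Suc_I)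
qed simp

lemma gdist_automorphism:
  assumes f: "automorphism f"
  shows "d (f u) (f v) = d u v"
proof (rule antisym)
  have edges: "E u v \<Longrightarrow> E (f u) (f v)" "E u v \<Longrightarrow> E (inv_into UNIV f u) (inv_into UNIV f v)" for u v
    using f unfolding automorphism_def by (metis bij_is_surj surj_f_inv_f)+
  show "d (f u) (f v) \<le> d u v"
    using relpowp_map_edges[OF edges(1) relpowp_gdist] by (rule gdist_le)
  have "d (inv_into UNIV f (f u)) (inv_into UNIV f (f v)) \<le> d (f u) (f v)"
    using relpowp_map_edges[OF edges(2) relpowp_gdist] by (rule gdist_le)
  then show "d u v \<le> d (f u) (f v)"
    using f unfolding automorphism_def by (simp add: bij_is_inj)
qed

lemma ginterval_automorphism:
  assumes f: "automorphism f"
  shows "f ` ginterval E x y = ginterval E (f x) (f y)"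
proof -
  have "f -` ginterval E (f x) (f y) = ginterval E x y"
    unfolding ginterval_def by (simp add: gdist_automorphism[OF f])
  moreover have "surj f"
    using f unfolding automorphism_def by (simp add: bij_is_surj)
  ultimately show ?thesis
    by (metis surj_image_vimage_eq)
qed

lemma ginterval_sym: "ginterval E x y = ginterval E y x"
  unfolding ginterval_def by (auto simp: gdist_sym)

lemma mem_S_automorphism:
  assumes f: "automorphism f" and J: "J \<in> hyperplanes E" and stable: "hyp_image f J = J"
  shows "J \<in> S (f u) (f v) \<longleftrightarrow> J \<in> S u v"
proof -
  obtain a b where ab: "E a b" and J_eq: "J = hyperplane_of {a, b}"
    using J unfolding hyperplanes_eq by blast
  have "f ` {a, b} \<in> hyp_image f J"
    unfolding hyp_image_def J_eq by (rule imageI) (rule mem_hyperplane_of_self)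
  then have J_eq': "J = hyperplane_of {f a, f b}"
    using stable J_eq hyperplane_of_eq by simp
  have fab: "E (f a) (f b)"
    using ab f unfolding automorphism_def by blast
  have "J \<in> S (f u) (f v) \<longleftrightarrow>
      \<not> (d (f u) (f a) < d (f u) (f b) \<longleftrightarrow> d (f v) (f a) < d (f v) (f b))"
    using hyperplane_of_mem_S_iff[OF fab] J_eq' by simp
  also have "\<dots> \<longleftrightarrow> \<not> (d u a < d u b \<longleftrightarrow> d v a < d v b)"
    by (simp only: gdist_automorphism[OF f])
  also have "\<dots> \<longleftrightarrow> J \<in> S u v"
    using hyperplane_of_mem_S_iff[OF ab] J_eq by simp
  finally show ?thesis .
qed

section \<open>Intervals spanned by adjacent hyperplanes\<close>

lemma S_eq_sym_diff: "S u v = sym_diff (S z u) (S z v)"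
  using S_triangle[of u v z] S_sym[of u z] by blast

lemma inj_S: "inj (S z)"
proof (rule injI)
  fix u v
  assume "S z u = S z v"
  then have "S u v = {}"
    using S_eq_sym_diff[of u v z] by simp
  then show "u = v"
    by (simp add: S_eq_empty_iff)
qed

lemma ginterval_iff_S_subset: "v \<in> ginterval E z w \<longleftrightarrow> S z v \<subseteq> S z w"
  using ginterval_iff_S_disjoint[of v z w] S_triangle[of z w v] by blast

lemma mem_S_between:
  assumes "m \<in> ginterval E x y" and H: "H \<in> hyperplanes E"
  shows "(H \<in> S z m \<longleftrightarrow> H \<in> S z x) \<or> (H \<in> S z m \<longleftrightarrow> H \<in> S z y)"
proof -
  have "H \<notin> S x m \<or> H \<notin> S m y"
    using assms(1) ginterval_iff_S_disjoint by blast
  then show ?thesis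
    using mem_S_iff_xor[OF H, of z m x] mem_S_iff_xor[OF H, of z m y] S_sym[of y m] by blast
qed

lemma S_singleton_if_mem_carrier:
  assumes J: "J \<in> hyperplanes E" and "z \<in> carrier_hyp J"
  obtains z' where "S z z' = {J}"
proof -
  obtain a b where ab: "E a b" and J_eq: "J = hyperplane_of {a, b}"
    using J unfolding hyperplanes_eq by blast
  obtain e where "e \<in> J" "z \<in> e"
    using \<open>z \<in> carrier_hyp J\<close> unfolding carrier_hyp_def by blast
  then obtain z' where "E z z'" "{z, z'} \<in> J"
    using crossing_if_mem_hyperplane_of[OF ab, of e] J_eq edge_sym
    by (metis insert_commute insert_iff singletonD)
  then have "S z z' = {J}"
    using S_edge hyperplane_of_eq J_eq by metis
  then show ?thesis
    by (rule that)
qed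

lemma mem_carrier_hyperplane_of: "z \<in> carrier_hyp (hyperplane_of {z, z'})"
  unfolding carrier_hyp_def using mem_hyperplane_of_self by blast

lemma ex_S_eq_if_adjacent:
  assumes "finite T" and "T \<subseteq> S z w" and "\<forall>J\<in>T. z \<in> carrier_hyp J"
  shows "\<exists>v. S z v = T"
  using assms
proof (induction T rule: finite_induct)
  case empty
  then show ?case
    using S_self by blast
next
  case (insert H T)
  then obtain v where v: "S z v = T"
    by blast
  obtain zh where zh: "S z zh = {H}"
    using S_singleton_if_mem_carrier insert.prems S_subset_hyperplanes by blast
  obtain m where "d v m + d m zh = d v zh" "d zh m + d m w = d zh w" "d v m + d m w = d v w"
    by (rule median_exists)
  then have m: "m \<in> ginterval E v zh" "m \<in> ginterval E zh w" "m \<in> ginterval E v w"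
    unfolding ginterval_def by auto
  have "K \<in> S z m \<longleftrightarrow> K \<in> insert H T" if K: "K \<in> hyperplanes E" for K
    using mem_S_between[OF m(1) K, of z] mem_S_between[OF m(2) K, of z] mem_S_between[OF m(3) K, of z]
      insert.prems(1) v zh by auto
  then have "S z m = insert H T"
    using S_subset_hyperplanes insert.prems(1) by blast
  then show ?case
    by blast
qed

lemma ex_carrier_mem_S:
  assumes "v \<noteq> z"
  shows "\<exists>J\<in>S z v. z \<in> carrier_hyp J"
proof -
  obtain n where "d z v = Suc n"
    using assms gdist_eq_0_iff by (metis not0_implies_Suc)
  then obtain z' where z': "E z z'" "d z' v = n"
    by (rule gdist_SucE)
  then have "hyperplane_of {z, z'} \<in> S z v"
    using hyperplane_of_mem_S_iff[OF z'(1)] \<open>d z v = Suc n\<close> gdist_edge[OF z'(1)] gdist_sym[of v]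
    by simp
  then show ?thesis
    using mem_carrier_hyperplane_of by blast
qed

lemma is_cube_ginterval:
  assumes adjacent: "\<forall>J\<in>S z w. z \<in> carrier_hyp J"
  shows "is_cube E (ginterval E z w)"
proof (rule is_cubeI)
  show "finite (S z w)"
    by (rule finite_S)
  show "bij_betw (S z) (ginterval E z w) (Pow (S z w))"
  proof (rule bij_betw_imageI)
    show "inj_on (S z) (ginterval E z w)"
      using inj_S by (rule inj_on_subset) simp
    have "T \<in> S z ` ginterval E z w" if T: "T \<subseteq> S z w" for T
    proof -
      obtain v where "S z v = T"
        using ex_S_eq_if_adjacent[of T z w] T adjacent finite_subset[OF T finite_S] by blast
      then show ?thesis
        using T ginterval_iff_S_subset by blast
    qed
    then show "S z ` ginterval E z w = Pow (S z w)"
      using ginterval_iff_S_subset by blast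
  qed
  show "E u v \<longleftrightarrow> card (sym_diff (S z u) (S z v)) = 1" for u v
    unfolding S_eq_sym_diff[of u v z, symmetric] card_S gdist_eq_1_iff ..
qed

text \<open>With \<open>S z q = A\<close> the adjacent hyperplanes, \<open>S (f z) (f q) = A\<close> as \<open>f\<close> fixes \<open>A\<close>. So a
  hyperplane of \<open>S z (f q)\<close> adjacent to \<open>z\<close> would be in \<open>S z (f z)\<close> exactly when it is not in
  \<open>A\<close>, which is absurd; hence \<open>f q = z\<close>.\<close>

lemma automorphism_swaps_if_adjacent_stable:
  assumes f: "automorphism f"
    and stable: "\<And>J. J \<in> S z (f z) \<Longrightarrow> z \<in> carrier_hyp J \<Longrightarrow> hyp_image f J = J"
  shows "f (f z) = z" and "\<forall>J\<in>S z (f z). z \<in> carrier_hyp J"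
proof -
  define A where "A = {J \<in> S z (f z). z \<in> carrier_hyp J}"
  have A_sub: "A \<subseteq> S z (f z)"
    unfolding A_def by blast
  obtain q where q: "S z q = A"
    using ex_S_eq_if_adjacent[of A z "f z"] A_sub finite_subset[OF A_sub finite_S]
    unfolding A_def by blast
  have "A \<subseteq> S (f z) (f q)"
    using mem_S_automorphism[OF f] stable q S_subset_hyperplanes unfolding A_def by blast
  moreover have "card (S (f z) (f q)) = card A"
    using q card_S[of z q] by (simp add: card_S gdist_automorphism[OF f])
  ultimately have fq: "S (f z) (f q) = A"
    using card_subset_eq[OF finite_S] by metis
  have "f q = z"
  proof (rule ccontr)
    assume "f q \<noteq> z"
    then obtain J where J: "J \<in> S z (f q)" "z \<in> carrier_hyp J"
      using ex_carrier_mem_S by blast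
    then have "J \<in> S z (f z) \<longleftrightarrow> J \<notin> A"
      using mem_S_iff_xor[of J z "f q" "f z"] fq S_subset_hyperplanes by blast
    then show False
      using J(2) A_sub unfolding A_def by blast
  qed
  then have A_eq: "S z (f z) = A"
    using fq S_sym by simp
  then show "\<forall>J\<in>S z (f z). z \<in> carrier_hyp J"
    unfolding A_def by blast
  show "f (f z) = z"
    using injD[OF inj_S[of z], of q "f z"] q A_eq \<open>f q = z\<close> by simp
qed

lemma hyp_image_eq_if_strongly_collapsible:
  assumes "strongly_collapsible G E phi \<HH>" and "g \<in> carrier G" and "S z (phi g z) \<subseteq> \<HH>"
    and J: "J \<in> S z (phi g z)" "z \<in> carrier_hyp J"
  shows "hyp_image (phi g) J = J"
proof -
  have "Sep E (carrier_hyp J) (carrier_hyp (hyp_image (phi g) J)) \<subseteq> S z (phi g z)"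
    using J(2) mem_carrier_hyp_image[OF J(2)] by (intro Sep_antimono) auto
  then show ?thesis
    using assms unfolding strongly_collapsible_def by blast
qed

end

theorem lemma3p5:
  fixes G :: "('g, 'b) monoid_scheme" and E :: "'v \<Rightarrow> 'v \<Rightarrow> bool"
    and phi :: "'g \<Rightarrow> 'v \<Rightarrow> 'v" and \<HH> :: "'v set set set"
  assumes "cat0_cube_complex E"
    and "isometric_action G E phi"
    and "no_cube_inversions G E phi"
    and "invariant_family G E phi \<HH>"
    and "strongly_collapsible G E phi \<HH>"
  shows "weakly_collapsible G E phi \<HH>"
proof -
  interpret cube_complex_graph E
    using assms(1) by unfold_locales
  show ?thesis
    unfolding weakly_collapsible_def
  proof (intro allI ballI impI notI)
    fix z g
    assume g: "g \<in> carrier G" and moved: "phi g z \<noteq> z" and sep: "S z (phi g z) \<subseteq> \<HH>"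
    have f: "automorphism (phi g)"
      using assms(2) g by (rule automorphism_if_isometric_action)
    have "hyp_image (phi g) J = J" if "J \<in> S z (phi g z)" "z \<in> carrier_hyp J" for J
      using hyp_image_eq_if_strongly_collapsible[OF assms(5) g sep that] .
    then have swap: "phi g (phi g z) = z" and adjacent: "\<forall>J\<in>S z (phi g z). z \<in> carrier_hyp J"
      using automorphism_swaps_if_adjacent_stable[OF f] by blast+
    have "is_cube E (ginterval E z (phi g z))"
      using adjacent by (rule is_cube_ginterval)
    moreover have "phi g ` ginterval E z (phi g z) = ginterval E z (phi g z)"
      using ginterval_automorphism[OF f] swap ginterval_sym by simp
    moreover have "z \<in> ginterval E z (phi g z)"
      unfolding ginterval_def by simp
    ultimately have "phi g z = z"
      using assms(3) g unfolding no_cube_inversions_def by blast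
    with moved show False ..
  qed
qed

end
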